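(* Let $k,m\in\mathbb{N}$ with $m<k\le 2m$ and $\gcd(2k+1,2(2m+1))=1$, and let $a>0$ satisfy $\frac{1}{4km+3k+m+1}\le\frac{a}{2k+1}\le\frac{1}{4km+k+3m+1}$. For $s=1,\dots,4m+1$ and $n=1,\dots,2k$, put $X_{sn}=\frac{s}{2(2m+1)}-\frac{n}{2k+1}$ and $\Phi_{sn}(0,0)=\sum_{l\in\mathbb{Z}}Q_2\big(2a(2m+1)(l+X_{sn})\big)$, where $Q_2(x)=(1-|x|)\chi_{[-1,1]}(x)$. Then $-1<X_{sn}<1$, $X_{sn}\neq0$, and $$\Phi_{sn}(0,0)=\begin{cases}\sum_{l=-1}^{0}Q_2\big(2a(2m+1)(l+X_{sn})\big), & 0<X_{sn}<1,\\ \sum_{l=0}^{1}Q_2\big(2a(2m+1)(l+X_{sn})\big), & -1<X_{sn}<0.\end{cases}$$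
   Context: This is the setting $ab=\frac{2k+1}{2(2m+1)}$ with $b$ in $\left[\frac{2k+1}{2}-\frac{k-m}{2(2m+1)},\frac{2k+1}{2}+\frac{k-m}{2(2m+1)}\right]$, rewritten as the stated range for $a$; $\Phi_{sn}(0,0)$ is the $(s,n)$ entry of the symbol matrix of the Gabor system of $Q_2$ at $(x,t)=(0,0)$. *)

theory Defs
  imports "HOL-Analysis.Analysis"
begin

definition Q2 :: "real \<Rightarrow> real" where
  "Q2 x = (1 - \<bar>x\<bar>) * indicator {-1..1} x"

definition Xsn :: "nat \<Rightarrow> nat \<Rightarrow> nat \<Rightarrow> nat \<Rightarrow> real" where
  "Xsn k m s n = real s / (2 * (2 * real m + 1)) - real n / (2 * real k + 1)"

definition Phi00 :: "real \<Rightarrow> nat \<Rightarrow> nat \<Rightarrow> nat \<Rightarrow> nat \<Rightarrow> real" where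
  "Phi00 a k m s n = (\<Sum>\<^sub>\<infinity> l::int. Q2 (2 * a * (2 * real m + 1) * (real_of_int l + Xsn k m s n)))"

end

theory Submission
  imports Defs
begin

text \<open>The lower bound on \<open>a\<close> makes the dilation factor \<open>c = 2a(2m+1)\<close> at least 1, so the
  term \<open>Q\<^sub>2(c(l + X))\<close> vanishes unless \<open>\<bar>l + X\<bar> < 1\<close>; for \<open>0 < X < 1\<close> this leaves
  \<open>l \<in> {-1, 0}\<close> and for \<open>-1 < X < 0\<close> it leaves \<open>l \<in> {0, 1}\<close>. Finally \<open>X \<noteq> 0\<close>, since
  \<open>s/(2(2m+1)) = n/(2k+1)\<close> with coprime denominators would force \<open>2(2m+1)\<close> to divide
  \<open>s \<le> 4m+1\<close>.\<close>

lemma Q2_eq_0: "1 \<le> \<bar>x\<bar> \<Longrightarrow> Q2 x = 0"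
  by (auto simp: Q2_def indicator_def)

lemma infsum_Q2_shift_eq_sum:
  fixes c X :: real and S :: "int set"
  assumes "1 \<le> c" and "finite S" and outside: "\<And>l. l \<notin> S \<Longrightarrow> 1 \<le> \<bar>of_int l + X\<bar>"
  shows "(\<Sum>\<^sub>\<infinity> l::int. Q2 (c * (of_int l + X))) = (\<Sum>l\<in>S. Q2 (c * (of_int l + X)))"
proof -
  have "Q2 (c * (of_int l + X)) = 0" if "l \<notin> S" for l
  proof (rule Q2_eq_0)
    have "1 \<le> \<bar>of_int l + X\<bar>" using outside that .
    also have "\<dots> \<le> c * \<bar>of_int l + X\<bar>" using mult_right_mono[OF \<open>1 \<le> c\<close> abs_ge_zero] by simp
    finally show "1 \<le> \<bar>c * (of_int l + X)\<bar>" using \<open>1 \<le> c\<close> by (simp add: abs_mult)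
  qed
  then have "(\<Sum>\<^sub>\<infinity> l::int. Q2 (c * (of_int l + X))) = (\<Sum>\<^sub>\<infinity> l\<in>S. Q2 (c * (of_int l + X)))"
    by (intro infsum_cong_neutral) auto
  with \<open>finite S\<close> show ?thesis by simp
qed

lemma infsum_Q2_shift_pos:
  fixes c X :: real
  assumes "1 \<le> c" and "0 < X" and "X < 1"
  shows "(\<Sum>\<^sub>\<infinity> l::int. Q2 (c * (of_int l + X))) = (\<Sum>l\<in>{-1..0}. Q2 (c * (of_int l + X)))"
proof (rule infsum_Q2_shift_eq_sum)
  fix l :: int
  assume "l \<notin> {-1..0}"
  then have "1 \<le> l \<or> l \<le> -2" by auto
  with assms show "1 \<le> \<bar>of_int l + X\<bar>" by linarith
qed (use assms in auto)

lemma infsum_Q2_shift_neg: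
  fixes c X :: real
  assumes "1 \<le> c" and "-1 < X" and "X < 0"
  shows "(\<Sum>\<^sub>\<infinity> l::int. Q2 (c * (of_int l + X))) = (\<Sum>l\<in>{0..1}. Q2 (c * (of_int l + X)))"
proof (rule infsum_Q2_shift_eq_sum)
  fix l :: int
  assume "l \<notin> {0..1}"
  then have "2 \<le> l \<or> l \<le> -1" by auto
  with assms show "1 \<le> \<bar>of_int l + X\<bar>" by linarith
qed (use assms in auto)

lemma Xsn_less_1: "s < 2 * (2 * m + 1) \<Longrightarrow> Xsn k m s n < 1"
proof -
  assume "s < 2 * (2 * m + 1)"
  then have "real s / (2 * (2 * real m + 1)) < 1" by (simp add: field_simps)
  moreover have "0 \<le> real n / (2 * real k + 1)" by simp
  ultimately show ?thesis unfolding Xsn_def by linarith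
qed

lemma Xsn_greater_neg_1: "n < 2 * k + 1 \<Longrightarrow> -1 < Xsn k m s n"
proof -
  assume "n < 2 * k + 1"
  then have "real n / (2 * real k + 1) < 1" by (simp add: field_simps)
  moreover have "0 \<le> real s / (2 * (2 * real m + 1))" by simp
  ultimately show ?thesis unfolding Xsn_def by linarith
qed

lemma Xsn_nonzero:
  assumes "coprime (2 * k + 1) (2 * (2 * m + 1))" and "0 < s" and "s < 2 * (2 * m + 1)"
  shows "Xsn k m s n \<noteq> 0"
proof
  assume "Xsn k m s n = 0"
  then have "real s / (2 * (2 * real m + 1)) = real n / (2 * real k + 1)"
    by (simp add: Xsn_def)
  then have "real s * (2 * real k + 1) = real n * (2 * (2 * real m + 1))"
    by (simp add: frac_eq_eq)
  then have "real (s * (2 * k + 1)) = real (n * (2 * (2 * m + 1)))"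
    by (simp add: algebra_simps)
  then have "s * (2 * k + 1) = n * (2 * (2 * m + 1))" by (simp only: of_nat_eq_iff)
  then have "2 * (2 * m + 1) dvd s * (2 * k + 1)" by (metis dvd_triv_right)
  with assms(1) have "2 * (2 * m + 1) dvd s"
    using coprime_commute coprime_dvd_mult_left_iff by blast
  with assms(2,3) show False by (simp add: nat_dvd_not_less)
qed

lemma dilation_ge_1:
  fixes a :: real
  assumes "0 < a" and "1 / (4 * real k * real m + 3 * real k + real m + 1) \<le> a / (2 * real k + 1)"
  shows "1 \<le> 2 * a * (2 * real m + 1)"
proof -
  define D where "D = 4 * real k * real m + 3 * real k + real m + 1"
  have "0 < D" unfolding D_def by (simp add: add_nonneg_pos)
  with assms(2) have "2 * real k + 1 \<le> a * D" by (simp add: D_def field_simps)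
  also have "\<dots> \<le> a * (2 * (2 * real m + 1) * (2 * real k + 1))"
    using \<open>0 < a\<close> by (intro mult_left_mono) (simp_all add: D_def algebra_simps)
  finally have "(2 * real k + 1) * 1 \<le> (2 * real k + 1) * (2 * a * (2 * real m + 1))"
    by (simp add: algebra_simps)
  then show ?thesis by (rule mult_left_le_imp_le) simp
qed

theorem lemma3p1:
  fixes k m s n :: nat and a :: real
  assumes "m < k" and "k \<le> 2 * m"
    and "gcd (2 * k + 1) (2 * (2 * m + 1)) = 1"
    and "a > 0"
    and "1 / (4 * real k * real m + 3 * real k + real m + 1) \<le> a / (2 * real k + 1)"
    and "a / (2 * real k + 1) \<le> 1 / (4 * real k * real m + real k + 3 * real m + 1)"
    and "1 \<le> s" and "s \<le> 4 * m + 1" and "1 \<le> n" and "n \<le> 2 * k"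
  shows "-1 < Xsn k m s n \<and> Xsn k m s n < 1 \<and> Xsn k m s n \<noteq> 0 \<and>
    (0 < Xsn k m s n \<longrightarrow>
       Phi00 a k m s n = (\<Sum>l\<in>{-1..0::int}. Q2 (2 * a * (2 * real m + 1) * (real_of_int l + Xsn k m s n)))) \<and>
    (Xsn k m s n < 0 \<longrightarrow>
       Phi00 a k m s n = (\<Sum>l\<in>{0..1::int}. Q2 (2 * a * (2 * real m + 1) * (real_of_int l + Xsn k m s n))))"
proof -
  have dilation: "1 \<le> 2 * a * (2 * real m + 1)"
    using assms(4,5) by (rule dilation_ge_1)
  have s_range: "0 < s" "s < 2 * (2 * m + 1)" using assms(7,8) by simp_all
  have lower: "-1 < Xsn k m s n" using assms(10) by (simp add: Xsn_greater_neg_1)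
  have upper: "Xsn k m s n < 1" using s_range(2) by (rule Xsn_less_1)
  have "coprime (2 * k + 1) (2 * (2 * m + 1))" using assms(3) by (simp add: coprime_iff_gcd_eq_1)
  then have nonzero: "Xsn k m s n \<noteq> 0" using s_range by (rule Xsn_nonzero)
  show ?thesis
    using lower upper nonzero
    by (simp add: Phi00_def infsum_Q2_shift_pos[OF dilation] infsum_Q2_shift_neg[OF dilation])
qed

end
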